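(* Let $T=\sum_{\lambda\in\Lambda}c_\lambda U_\lambda$ with $\Lambda\subset\mathbb{R}^{2d}$ finite and $\Lambda\subset E_{R_0}(0)$ for some $R_0>0$. Then for every submultiplicative weight $v$ on $\mathbb{R}^{2d}$ and every integer $n\ge1$, $$\|T^n\|_{\mathcal{A}_v}\le(n+1)^{|\Lambda|/2}\,w(nR_0)\,\|T^n\|_{B(L^2(\mathbb{R}^d))},$$ where $w(a)=\sup_{\|x\|=a}v(x)$.
   Context: For $\lambda=(t,\omega)\in\mathbb{R}^d\times\mathbb{R}^d$, $U_{(t,\omega)}f(x)=e^{i\langle\omega,x\rangle}f(x-t)$ on $L^2(\mathbb{R}^d)$. $E_{R}(0)$ is the closed Euclidean ball of radius $R$ about $0$ in $\mathbb{R}^{2d}$; $|\Lambda|$ is the cardinality of $\Lambda$. A weight is a function $v:\mathbb{R}^{2d}\to[0,\infty)$ with $v(0)=1$, $v(-x)=v(x)$, radially non-decreasing; it is submultiplicative if $v(x+y)\le v(x)v(y)$ for all $x,y$. $\|T\|_{\mathcal{A}_v}:=\sum_\lambda v(\lambda)|c_\lambda|$ for $T=\sum_\lambda c_\lambda U_\lambda$. *)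

theory Defs
  imports "HOL-Analysis.Analysis"
begin

text \<open>Phase space R^d x R^d, with d = CARD('n). A point lambda = (t, omega).
  The norm on the product type is sqrt(norm t ^ 2 + norm omega ^ 2), i.e. the
  Euclidean norm of R^{2d}.\<close>

definition tfshift :: "(real^'n) \<times> (real^'n) \<Rightarrow> (real^'n \<Rightarrow> complex) \<Rightarrow> (real^'n \<Rightarrow> complex)" where
  "tfshift lam f = (\<lambda>x. exp (\<i> * complex_of_real (snd lam \<bullet> x)) * f (x - fst lam))"

definition L2 :: "(real^'n \<Rightarrow> complex) set" where
  "L2 = {f. f \<in> borel_measurable lborel \<and> integrable lborel (\<lambda>x. (cmod (f x))^2)}"

definition L2norm :: "(real^'n \<Rightarrow> complex) \<Rightarrow> real" where
  "L2norm f = sqrt (LINT x|lborel. (cmod (f x))^2)"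

definition opnorm_L2 :: "((real^'n \<Rightarrow> complex) \<Rightarrow> (real^'n \<Rightarrow> complex)) \<Rightarrow> real" where
  "opnorm_L2 S = Sup {L2norm (S f) | f. f \<in> L2 \<and> L2norm f \<le> 1}"

definition tf_op :: "((real^'n) \<times> (real^'n)) set \<Rightarrow> ((real^'n) \<times> (real^'n) \<Rightarrow> complex)
     \<Rightarrow> (real^'n \<Rightarrow> complex) \<Rightarrow> (real^'n \<Rightarrow> complex)" where
  "tf_op Lam c f = (\<lambda>x. \<Sum>lam\<in>Lam. c lam * tfshift lam f x)"

definition tf_expansion :: "((real^'n \<Rightarrow> complex) \<Rightarrow> (real^'n \<Rightarrow> complex))
     \<Rightarrow> ((real^'n) \<times> (real^'n) \<Rightarrow> complex) \<Rightarrow> bool" where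
  "tf_expansion S c \<longleftrightarrow> finite {mu. c mu \<noteq> 0} \<and>
     (\<forall>f\<in>L2. S f = tf_op {mu. c mu \<noteq> 0} c f)"

text \<open>The weighted norm ||S||_{A_v} = sum_mu v(mu) |c_mu| (the expansion is unique).\<close>
definition Av_norm :: "((real^'n) \<times> (real^'n) \<Rightarrow> real)
     \<Rightarrow> ((real^'n \<Rightarrow> complex) \<Rightarrow> (real^'n \<Rightarrow> complex)) \<Rightarrow> real" where
  "Av_norm v S = (THE a. \<exists>c. tf_expansion S c \<and> a = (\<Sum>mu\<in>{mu. c mu \<noteq> 0}. v mu * cmod (c mu)))"

definition weight :: "('a::real_normed_vector \<Rightarrow> real) \<Rightarrow> bool" where
  "weight v \<longleftrightarrow> (\<forall>x. 0 \<le> v x) \<and> v 0 = 1 \<and> (\<forall>x. v (- x) = v x) \<and>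
     (\<forall>x s t. 0 \<le> s \<and> s \<le> t \<longrightarrow> v (s *\<^sub>R x) \<le> v (t *\<^sub>R x))"

definition submultiplicative :: "('a::real_normed_vector \<Rightarrow> real) \<Rightarrow> bool" where
  "submultiplicative v \<longleftrightarrow> (\<forall>x y. v (x + y) \<le> v x * v y)"

definition sphere_sup :: "('a::real_normed_vector \<Rightarrow> real) \<Rightarrow> real \<Rightarrow> real" where
  "sphere_sup v a = Sup (v ` {x. norm x = a})"

end

theory Submission
  imports Defs
begin

text \<open>Composing time-frequency shifts adds their indices up to a unimodular factor, so
  \<open>T\<^sup>n = \<Sum> b\<^sub>\<mu> U\<^sub>\<mu>\<close> with \<open>\<mu>\<close> in the \<open>n\<close>-fold sumset of \<open>\<Lambda>\<close>: at most \<open>(n + 1)^|\<Lambda>|\<close> points of norm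
  at most \<open>n R\<^sub>0\<close>, where \<open>v \<le> w (n R\<^sub>0)\<close>. By Cauchy-Schwarz it then suffices to show
  \<open>(\<Sum> |b\<^sub>\<mu>|^2)^(1/2) \<le> \<parallel>\<Sum> b\<^sub>\<mu> U\<^sub>\<mu>\<parallel>\<close> for every finite expansion; this also makes the
  expansion unique, so that the \<open>A\<^sub>v\<close>-norm is well defined.

  For the lower bound, test the operator on normalised chirps \<open>e^(i s |x|^2)\<close> restricted to
  \<open>[-L, L]^d\<close>. If the chirp rate \<open>s\<close> separates the frequencies \<open>\<omega> - 2 s t\<close> of the points
  \<open>(t, \<omega>)\<close>, the shifted chirps are, on a slightly smaller cube, the chirp times distinct plane
  waves. The mean of \<open>|\<Sum> c\<^sub>j e^(i \<theta>\<^sub>j \<cdot> x)|^2\<close> over large cubes tends to \<open>\<Sum> |c\<^sub>j|^2\<close>, because the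
  Fourier transform of the indicator of a cube of side \<open>2 r\<close> at \<open>\<theta> \<noteq> 0\<close> is only of the
  order of the volume of a shell of width \<open>2 pi / |\<theta>|\<close>.\<close>

section \<open>Time-frequency sums on \<open>L\<^sup>2\<close>\<close>

lemma integral_lborel_translate:
  fixes f :: "'a::euclidean_space \<Rightarrow> 'b::{banach,second_countable_topology}"
  assumes f: "f \<in> borel_measurable borel"
  shows "(LINT x|lborel. f (x - c)) = (LINT x|lborel. f x)"
proof -
  have "(LINT x|lborel. f x) = integral\<^sup>L (distr lborel borel ((+) (-c))) f"
    by (simp add: lborel_distr_plus)
  also have "\<dots> = (LINT x|lborel. f (-c + x))"
    by (rule integral_distr) (auto simp: f)
  finally show ?thesis by simp
qed

lemma integrable_lborel_translate:
  fixes f :: "'a::euclidean_space \<Rightarrow> 'b::{banach,second_countable_topology}"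
  assumes f: "integrable lborel f"
  shows "integrable lborel (\<lambda>x. f (x - c))"
proof -
  have "integrable (distr lborel borel ((+) (-c))) f"
    by (simp add: lborel_distr_plus f)
  then have "integrable lborel (\<lambda>x. f (-c + x))"
    using borel_measurable_integrable[OF f] by (subst (asm) integrable_distr_eq) auto
  then show ?thesis by simp
qed

lemma borel_measurable_cis [measurable]:
  "f \<in> borel_measurable M \<Longrightarrow> (\<lambda>x. cis (f x)) \<in> borel_measurable M"
  unfolding cis_conv_exp by measurable

lemma tfshift_eq_cis: "tfshift lam f x = cis (snd lam \<bullet> x) * f (x - fst lam)"
  by (simp add: tfshift_def cis_conv_exp)

lemma borel_measurable_tf_op [measurable]:
  fixes f :: "real^'n \<Rightarrow> complex"
  assumes "f \<in> borel_measurable lborel"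
  shows "tf_op M a f \<in> borel_measurable lborel"
  using assms unfolding tf_op_def tfshift_eq_cis by measurable

lemma norm_tf_op_sq_le:
  assumes "finite M"
  shows "(cmod (tf_op M a f x))^2
    \<le> card M * (\<Sum>mu\<in>M. (cmod (a mu))^2 * (cmod (f (x - fst mu)))^2)"
proof -
  have "cmod (tf_op M a f x) \<le> (\<Sum>mu\<in>M. 1 * (cmod (a mu) * cmod (f (x - fst mu))))"
    unfolding tf_op_def by (rule order_trans[OF norm_sum]) (simp add: norm_mult tfshift_eq_cis)
  then have "(cmod (tf_op M a f x))^2 \<le> (\<Sum>mu\<in>M. 1 * (cmod (a mu) * cmod (f (x - fst mu))))^2"
    by (simp add: power_mono)
  also have "\<dots> \<le> (\<Sum>mu\<in>M. 1^2) * (\<Sum>mu\<in>M. (cmod (a mu) * cmod (f (x - fst mu)))^2)"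
    by (rule Cauchy_Schwarz_ineq_sum)
  finally show ?thesis by (simp add: power_mult_distrib)
qed

lemma tf_op_L2:
  fixes f :: "real^'n \<Rightarrow> complex"
  assumes M: "finite M" and f: "f \<in> L2"
  shows "tf_op M a f \<in> L2"
    and "L2norm (tf_op M a f) \<le> sqrt (card M * (\<Sum>mu\<in>M. (cmod (a mu))^2)) * L2norm f"
proof -
  have fm: "f \<in> borel_measurable lborel" and fi: "integrable lborel (\<lambda>x. (cmod (f x))^2)"
    using f by (auto simp: L2_def)
  let ?g = "\<lambda>x. card M * (\<Sum>mu\<in>M. (cmod (a mu))^2 * (cmod (f (x - fst mu)))^2)"
  have gi: "integrable lborel ?g"
    using integrable_lborel_translate[OF fi] by (intro integrable_mult_right integrable_sum) auto
  have Tm: "tf_op M a f \<in> borel_measurable lborel"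
    using fm by measurable
  have Ti: "integrable lborel (\<lambda>x. (cmod (tf_op M a f x))^2)"
    by (rule Bochner_Integration.integrable_bound[OF gi])
      (use Tm in \<open>auto intro!: order_trans[OF norm_tf_op_sq_le[OF M]]\<close>)
  then show "tf_op M a f \<in> L2"
    using Tm by (simp add: L2_def)
  have "(LINT x|lborel. (cmod (tf_op M a f x))^2) \<le> integral\<^sup>L lborel ?g"
    by (rule integral_mono[OF Ti gi]) (rule norm_tf_op_sq_le[OF M])
  also have "\<dots> = card M * (\<Sum>mu\<in>M. (cmod (a mu))^2 * (LINT x|lborel. (cmod (f (x - fst mu)))^2))"
    by (simp add: integrable_lborel_translate[OF fi])
  also have "\<dots> = card M * (\<Sum>mu\<in>M. (cmod (a mu))^2) * (LINT x|lborel. (cmod (f x))^2)"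
    using fm by (simp add: integral_lborel_translate[where f = "\<lambda>x. (cmod (f x))^2"]
        sum_distrib_right)
  finally show "L2norm (tf_op M a f) \<le> sqrt (card M * (\<Sum>mu\<in>M. (cmod (a mu))^2)) * L2norm f"
    unfolding L2norm_def by (metis real_sqrt_le_mono real_sqrt_mult)
qed

lemma L2norm_nonneg: "0 \<le> L2norm f"
  unfolding L2norm_def by simp

lemma L2norm_tf_op_le_opnorm_L2:
  fixes f :: "real^'n \<Rightarrow> complex"
  assumes M: "finite M" and f: "f \<in> L2" "L2norm f \<le> 1"
  shows "L2norm (tf_op M a f) \<le> opnorm_L2 (tf_op M a)"
  unfolding opnorm_L2_def
proof (rule cSup_upper)
  let ?C = "sqrt (card M * (\<Sum>mu\<in>M. (cmod (a mu))^2))"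
  have "L2norm (tf_op M a g) \<le> ?C" if "g \<in> L2" "L2norm g \<le> 1" for g :: "real^'n \<Rightarrow> complex"
  proof -
    have "L2norm (tf_op M a g) \<le> ?C * L2norm g"
      by (rule tf_op_L2(2)[OF M that(1)])
    also have "\<dots> \<le> ?C"
      using that(2) by (intro mult_left_le) (auto simp: L2norm_nonneg sum_nonneg)
    finally show ?thesis .
  qed
  then show "bdd_above {L2norm (tf_op M a g) | g. g \<in> L2 \<and> L2norm g \<le> 1}"
    by (intro bdd_aboveI[of _ ?C]) blast
qed (use f in blast)

lemma opnorm_L2_cong:
  assumes "\<And>f. f \<in> L2 \<Longrightarrow> S f = S' f"
  shows "opnorm_L2 S = opnorm_L2 S'"
proof -
  have "{L2norm (S f) | f. f \<in> L2 \<and> L2norm f \<le> 1} = {L2norm (S' f) | f. f \<in> L2 \<and> L2norm f \<le> 1}"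
    using assms by metis
  then show ?thesis unfolding opnorm_L2_def by simp
qed

lemma opnorm_L2_zero: "opnorm_L2 (\<lambda>f::real^'n \<Rightarrow> complex. \<lambda>x. 0) = 0"
proof -
  have "(\<lambda>x. 0) \<in> (L2 :: (real^'n \<Rightarrow> complex) set)"
    unfolding L2_def by simp
  then have "{L2norm ((\<lambda>f::real^'n \<Rightarrow> complex. \<lambda>x::real^'n. 0::complex) f) | f. f \<in> L2 \<and> L2norm f \<le> 1} = {0}"
    by (auto simp: L2norm_def)
  then show ?thesis unfolding opnorm_L2_def by simp
qed

section \<open>Mean values of trigonometric polynomials over cubes\<close>

definition cube :: "real \<Rightarrow> (real^'n) set" where
  "cube r = cbox (\<chi> i. - r) (\<chi> i. r)"

lemma mem_cube: "x \<in> cube r \<longleftrightarrow> (\<forall>i. \<bar>x$i\<bar> \<le> r)"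
  unfolding cube_def mem_box_cart abs_le_iff by (intro iff_allI) auto

lemma sets_cube [measurable]: "cube r \<in> sets borel"
  unfolding cube_def by simp

lemma measure_cube:
  assumes "0 \<le> r"
  shows "measure lborel (cube r :: (real^'n) set) = (2*r)^CARD('n)"
proof -
  have "\<forall>b\<in>(Basis::(real^'n) set). ((\<chi> i. r) - (\<chi> i. -r)) \<bullet> b = 2*r"
    and "\<forall>b\<in>(Basis::(real^'n) set). (\<chi> i. -r) \<bullet> b \<le> (\<chi> i. r) \<bullet> b"
    using assms by (auto simp: Basis_vec_def inner_axis)
  then have "measure lborel (cube r :: (real^'n) set) = (\<Prod>b\<in>(Basis::(real^'n) set). 2*r)"
    unfolding cube_def measure_lborel_cbox_eq by (auto intro!: prod.cong)
  then show ?thesis by simp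
qed

lemma integrable_indicator_cube: "integrable lborel (indicator (cube r) :: real^'n \<Rightarrow> real)"
  unfolding cube_def by (intro integrable_real_indicator emeasure_lborel_cbox_finite) auto

lemma integrable_indicator_cube_mult:
  fixes g :: "real^'n \<Rightarrow> complex"
  assumes "g \<in> borel_measurable lborel" "\<And>x. cmod (g x) \<le> 1"
  shows "integrable lborel (\<lambda>x. of_real (indicator (cube r) x) * g x)"
  by (rule Bochner_Integration.integrable_bound[OF integrable_indicator_cube[of r]])
     (use assms in \<open>auto simp: norm_mult indicator_def\<close>)

definition cube_fourier :: "real \<Rightarrow> real^'n \<Rightarrow> complex" where
  "cube_fourier r \<theta> = (LINT x|lborel. of_real (indicator (cube r) x) * cis (\<theta> \<bullet> x))"

lemma cube_fourier_0: "0 \<le> r \<Longrightarrow> cube_fourier r (0::real^'n) = of_real ((2*r)^CARD('n))"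
  unfolding cube_fourier_def by (simp add: measure_cube)

lemma double_cube_fourier_eq:
  fixes \<theta> p :: "real^'n"
  assumes "\<theta> \<bullet> p = pi"
  shows "2 * cube_fourier r \<theta>
    = (LINT x|lborel. of_real (indicator (cube r) x - indicator (cube r) (x - p)) * cis (\<theta> \<bullet> x))"
proof -
  let ?\<chi> = "\<lambda>x. indicator (cube r) x :: real"
  let ?e = "\<lambda>x. cis (\<theta> \<bullet> x)"
  have i1: "integrable lborel (\<lambda>x. ?\<chi> x * ?e x)"
    by (rule integrable_indicator_cube_mult) auto
  have i2: "integrable lborel (\<lambda>x. ?\<chi> (x - p) * ?e x)"
    by (rule Bochner_Integration.integrable_bound[OF integrable_lborel_translate[OF integrable_indicator_cube]])
      (auto simp: norm_mult indicator_def)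
  have "(LINT x|lborel. ?\<chi> (x - p) * ?e x) = (LINT x|lborel. ?\<chi> (x - p) * ?e (x - p) * cis pi)"
    by (simp add: inner_diff_right assms cis_divide[symmetric])
  also have "\<dots> = - cube_fourier r \<theta>"
    unfolding cube_fourier_def
    by (subst integral_lborel_translate[where f = "\<lambda>x. ?\<chi> x * ?e x * cis pi"]) simp_all
  finally have "2 * cube_fourier r \<theta> = cube_fourier r \<theta> - (LINT x|lborel. ?\<chi> (x - p) * ?e x)"
    by simp
  also have "\<dots> = (LINT x|lborel. ?\<chi> x * ?e x - ?\<chi> (x - p) * ?e x)"
    unfolding cube_fourier_def by (rule Bochner_Integration.integral_diff[OF i1 i2, symmetric])
  also have "\<dots> = (LINT x|lborel. (?\<chi> x - ?\<chi> (x - p)) * ?e x)"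
    by (simp only: of_real_diff left_diff_distrib)
  finally show ?thesis .
qed

lemma abs_indicator_cube_diff_translate_le:
  fixes p :: "real^'n"
  assumes p: "\<And>i. \<bar>p$i\<bar> \<le> h" and "0 \<le> h"
  shows "\<bar>indicator (cube r) x - indicator (cube r) (x - p) :: real\<bar>
    \<le> indicator (cube (r + h)) x - indicator (cube (r - h)) x"
proof -
  have tri: "\<bar>x$i\<bar> \<le> \<bar>(x - p)$i\<bar> + \<bar>p$i\<bar>" "\<bar>(x - p)$i\<bar> \<le> \<bar>x$i\<bar> + \<bar>p$i\<bar>" for i
    by auto
  have "x \<in> cube r \<and> x - p \<in> cube r" if "x \<in> cube (r - h)"
    unfolding mem_cube
  proof (intro conjI allI)
    fix i
    have "\<bar>x$i\<bar> \<le> r - h"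
      using that unfolding mem_cube by blast
    then show "\<bar>x$i\<bar> \<le> r" "\<bar>(x - p)$i\<bar> \<le> r"
      using tri(2)[of i] p[of i] \<open>0 \<le> h\<close> by linarith+
  qed
  moreover have "x \<in> cube (r + h)" if "x \<in> cube r \<or> x - p \<in> cube r"
    unfolding mem_cube
  proof
    fix i
    have "\<bar>x$i\<bar> \<le> r \<or> \<bar>(x - p)$i\<bar> \<le> r"
      using that unfolding mem_cube by blast
    then show "\<bar>x$i\<bar> \<le> r + h"
      using tri(1)[of i] p[of i] \<open>0 \<le> h\<close> by linarith
  qed
  ultimately show ?thesis
    by (auto simp: indicator_def)
qed

lemma norm_cube_fourier_le:
  fixes \<theta> :: "real^'n"
  assumes "\<theta> \<noteq> 0" and r: "pi / norm \<theta> \<le> r"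
  shows "cmod (cube_fourier r \<theta>)
     \<le> ((2*(r + pi/norm \<theta>))^CARD('n) - (2*(r - pi/norm \<theta>))^CARD('n)) / 2"
proof -
  define h where "h = pi / norm \<theta>"
  \<comment> \<open>translating by \<open>p\<close> changes the sign of the integrand, so only the shell between
    \<open>cube (r - h)\<close> and \<open>cube (r + h)\<close> contributes\<close>
  define p where "p = (pi / (\<theta> \<bullet> \<theta>)) *\<^sub>R \<theta>"
  have "0 \<le> h"
    unfolding h_def by simp
  have "norm p = h"
    unfolding p_def h_def using assms(1) by (simp add: power2_norm_eq_inner[symmetric] power2_eq_square)
  then have p: "\<bar>p$i\<bar> \<le> h" for i
    using component_le_norm_cart[of p i] by simp
  have "\<theta> \<bullet> p = pi"
    unfolding p_def using assms(1) by simp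
  have "cmod (2 * cube_fourier r \<theta>)
      \<le> (LINT x|lborel. cmod (of_real (indicator (cube r) x - indicator (cube r) (x - p)) * cis (\<theta> \<bullet> x)))"
    unfolding double_cube_fourier_eq[OF \<open>\<theta> \<bullet> p = pi\<close>] by (rule integral_norm_bound)
  also have "\<dots> \<le> (LINT x|lborel. indicator (cube (r + h)) (x::real^'n) - indicator (cube (r - h)) x)"
  proof (rule Bochner_Integration.integral_mono)
    show "integrable lborel (\<lambda>x. cmod (of_real (indicator (cube r) x - indicator (cube r) (x - p)) * cis (\<theta> \<bullet> x)))"
    proof (rule integrable_norm)
      have "integrable lborel (\<lambda>x. indicator (cube r) x - indicator (cube r) (x - p) :: real)"
        by (intro Bochner_Integration.integrable_diff integrable_indicator_cube
            integrable_lborel_translate)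
      then show "integrable lborel (\<lambda>x. of_real (indicator (cube r) x - indicator (cube r) (x - p))
          * cis (\<theta> \<bullet> x))"
        by (rule Bochner_Integration.integrable_bound) (auto simp: norm_mult simp del: of_real_diff)
    qed
    show "integrable lborel (\<lambda>x. indicator (cube (r + h)) x - indicator (cube (r - h)) x :: real)"
      by (intro Bochner_Integration.integrable_diff integrable_indicator_cube)
    show "cmod (of_real (indicator (cube r) x - indicator (cube r) (x - p)) * cis (\<theta> \<bullet> x))
        \<le> indicator (cube (r + h)) x - indicator (cube (r - h)) x" for x
      using abs_indicator_cube_diff_translate_le[OF p \<open>0 \<le> h\<close>] by (simp add: norm_mult del: of_real_diff)
  qed
  also have "\<dots> = (2*(r + h))^CARD('n) - (2*(r - h))^CARD('n)"
    using \<open>0 \<le> h\<close> r unfolding h_def[symmetric]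
    by (simp add: Bochner_Integration.integral_diff[OF integrable_indicator_cube integrable_indicator_cube]
        measure_cube)
  finally show ?thesis
    unfolding h_def by (simp add: norm_mult)
qed

lemma tendsto_power_shift_ratio: "((\<lambda>r::real. (2*(r + c))^d / (2*r)^d) \<longlongrightarrow> 1) at_top"
proof -
  have "((\<lambda>r::real. (1 + c / r)^d) \<longlongrightarrow> (1 + 0)^d) at_top"
    by (intro tendsto_intros tendsto_divide_0[OF tendsto_const] filterlim_at_top_imp_at_infinity
        filterlim_ident)
  moreover have "eventually (\<lambda>r::real. (1 + c / r)^d = (2*(r + c))^d / (2*r)^d) at_top"
    using eventually_gt_at_top[of 0]
  proof eventually_elim
    case (elim r)
    then have "1 + c / r = (2*(r + c)) / (2*r)" by (simp add: field_simps)
    then show ?case by (simp add: power_divide)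
  qed
  ultimately show ?thesis using tendsto_cong by fastforce
qed

lemma tendsto_cube_fourier_mean:
  fixes \<theta> :: "real^'n"
  shows "((\<lambda>r. cube_fourier r \<theta> / of_real ((2*r)^CARD('n))) \<longlongrightarrow> (if \<theta> = 0 then 1 else 0)) at_top"
proof (cases "\<theta> = 0")
  case True
  have "eventually (\<lambda>r. cube_fourier r \<theta> / of_real ((2*r)^CARD('n)) = 1) at_top"
    using eventually_gt_at_top[of 0] by eventually_elim (simp add: True cube_fourier_0)
  then show ?thesis
    using True by (simp add: tendsto_eventually)
next
  case False
  define h where "h = pi / norm \<theta>"
  let ?E = "\<lambda>r. ((2*(r + h))^CARD('n) / (2*r)^CARD('n) - (2*(r + - h))^CARD('n) / (2*r)^CARD('n)) / 2"
  have "(?E \<longlongrightarrow> (1 - 1) / 2) at_top"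
    by (intro tendsto_intros tendsto_power_shift_ratio) simp
  then have "(?E \<longlongrightarrow> 0) at_top"
    by simp
  moreover have "eventually (\<lambda>r. cmod (cube_fourier r \<theta> / of_real ((2*r)^CARD('n))) \<le> ?E r) at_top"
    using eventually_ge_at_top[of h] eventually_gt_at_top[of 0]
  proof eventually_elim
    case (elim r)
    then have "cmod (cube_fourier r \<theta>) \<le> ((2*(r + h))^CARD('n) - (2*(r - h))^CARD('n)) / 2"
      using norm_cube_fourier_le[OF False] unfolding h_def by blast
    have "cmod (cube_fourier r \<theta> / of_real ((2*r)^CARD('n)))
        = cmod (cube_fourier r \<theta>) / (2*r)^CARD('n)"
      unfolding norm_divide norm_of_real using elim by simp
    also have "\<dots> \<le> ((2*(r + h))^CARD('n) - (2*(r - h))^CARD('n)) / 2 / (2*r)^CARD('n)"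
      using \<open>cmod (cube_fourier r \<theta>) \<le> _\<close> elim by (intro divide_right_mono) auto
    also have "\<dots> = ?E r"
      by (simp add: diff_divide_distrib)
    finally show ?case .
  qed
  ultimately have "((\<lambda>r. cube_fourier r \<theta> / of_real ((2*r)^CARD('n))) \<longlongrightarrow> 0) at_top"
    by (rule Lim_null_comparison[rotated])
  then show ?thesis
    using False by simp
qed

definition trig_poly :: "'a set \<Rightarrow> ('a \<Rightarrow> complex) \<Rightarrow> ('a \<Rightarrow> real^'n) \<Rightarrow> real^'n \<Rightarrow> complex" where
  "trig_poly M b \<theta> x = (\<Sum>mu\<in>M. b mu * cis (\<theta> mu \<bullet> x))"

lemma norm_trig_poly_sq:
  "complex_of_real ((cmod (trig_poly M b \<theta> x))^2)
    = (\<Sum>mu\<in>M. \<Sum>nu\<in>M. b mu * cnj (b nu) * cis ((\<theta> mu - \<theta> nu) \<bullet> x))"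
proof -
  have "complex_of_real ((cmod (trig_poly M b \<theta> x))^2) = trig_poly M b \<theta> x * cnj (trig_poly M b \<theta> x)"
    by (rule complex_norm_square)
  also have "\<dots> = (\<Sum>mu\<in>M. \<Sum>nu\<in>M. (b mu * cis (\<theta> mu \<bullet> x)) * (cnj (b nu) * cis (- (\<theta> nu \<bullet> x))))"
    unfolding trig_poly_def by (simp add: sum_product cis_cnj)
  also have "\<dots> = (\<Sum>mu\<in>M. \<Sum>nu\<in>M. b mu * cnj (b nu) * cis ((\<theta> mu - \<theta> nu) \<bullet> x))"
    by (intro sum.cong refl) (simp add: inner_diff_left cis_divide[symmetric] divide_inverse ac_simps)
  finally show ?thesis .
qed

lemma integral_cube_norm_trig_poly_sq:
  fixes \<theta> :: "'a \<Rightarrow> real^'n"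
  shows "(LINT x|lborel. indicator (cube r) x * (cmod (trig_poly M b \<theta> x))^2)
    = Re (\<Sum>mu\<in>M. \<Sum>nu\<in>M. b mu * cnj (b nu) * cube_fourier r (\<theta> mu - \<theta> nu))"
proof -
  have integrable: "integrable lborel (\<lambda>x. of_real (indicator (cube r) x) * cis (\<eta> \<bullet> x))" for \<eta> :: "real^'n"
    by (rule integrable_indicator_cube_mult) auto
  have "complex_of_real (LINT x|lborel. indicator (cube r) x * (cmod (trig_poly M b \<theta> x))^2)
      = (LINT x|lborel. complex_of_real (indicator (cube r) x * (cmod (trig_poly M b \<theta> x))^2))"
    by (rule integral_complex_of_real[symmetric])
  also have "\<dots> = (LINT x|lborel. (\<Sum>mu\<in>M. \<Sum>nu\<in>M. b mu * cnj (b nu) *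
      (of_real (indicator (cube r) x) * cis ((\<theta> mu - \<theta> nu) \<bullet> x))))"
    unfolding of_real_mult norm_trig_poly_sq sum_distrib_left by (simp add: ac_simps)
  also have "\<dots> = (\<Sum>mu\<in>M. \<Sum>nu\<in>M. b mu * cnj (b nu) * cube_fourier r (\<theta> mu - \<theta> nu))"
    unfolding cube_fourier_def using integrable by (simp add: integrable_sum)
  finally show ?thesis
    by (metis Re_complex_of_real)
qed

lemma tendsto_cube_mean_norm_trig_poly_sq:
  fixes \<theta> :: "'a \<Rightarrow> real^'n"
  assumes "finite M" and "inj_on \<theta> M"
  shows "((\<lambda>r. (LINT x|lborel. indicator (cube r) x * (cmod (trig_poly M b \<theta> x))^2) / (2*r)^CARD('n))
    \<longlongrightarrow> (\<Sum>mu\<in>M. (cmod (b mu))^2)) at_top"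
proof -
  let ?F = "\<lambda>r \<eta>. cube_fourier r \<eta> / of_real ((2*r)^CARD('n))"
  have "((\<lambda>r. \<Sum>mu\<in>M. \<Sum>nu\<in>M. b mu * cnj (b nu) * ?F r (\<theta> mu - \<theta> nu))
    \<longlongrightarrow> (\<Sum>mu\<in>M. \<Sum>nu\<in>M. b mu * cnj (b nu) * (if \<theta> mu - \<theta> nu = 0 then 1 else 0))) at_top"
    by (intro tendsto_intros tendsto_cube_fourier_mean)
  also have "(\<Sum>mu\<in>M. \<Sum>nu\<in>M. b mu * cnj (b nu) * (if \<theta> mu - \<theta> nu = 0 then 1 else 0))
      = (\<Sum>mu\<in>M. b mu * cnj (b mu))"
  proof (intro sum.cong refl)
    fix mu assume "mu \<in> M"
    then have "\<theta> mu - \<theta> nu = 0 \<longleftrightarrow> nu = mu" if "nu \<in> M" for nu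
      using assms that by (auto dest: inj_onD)
    then show "(\<Sum>nu\<in>M. b mu * cnj (b nu) * (if \<theta> mu - \<theta> nu = 0 then 1 else 0))
        = b mu * cnj (b mu)"
      using \<open>mu \<in> M\<close> \<open>finite M\<close> by (simp add: if_distrib cong: if_cong)
  qed
  finally have "((\<lambda>r. Re (\<Sum>mu\<in>M. \<Sum>nu\<in>M. b mu * cnj (b nu) * ?F r (\<theta> mu - \<theta> nu)))
      \<longlongrightarrow> (\<Sum>mu\<in>M. (cmod (b mu))^2)) at_top"
    by (rule tendsto_Re[THEN tendsto_eq_rhs]) (simp add: complex_mult_cnj cmod_power2)
  then show ?thesis
    unfolding integral_cube_norm_trig_poly_sq
    by (simp add: sum_divide_distrib flip: Re_divide_of_real)
qed

section \<open>Chirps and the lower bound for the operator norm\<close>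

text \<open>Away from the edge of its support, the chirp \<open>cis (s * (x \<bullet> x))\<close> is mapped by the shift
  with index \<open>(t, \<omega>)\<close> to a constant multiple of itself times the plane wave of frequency
  \<open>\<omega> - 2 s t\<close>.\<close>

definition chirp_freq :: "real \<Rightarrow> (real^'n) \<times> (real^'n) \<Rightarrow> real^'n" where
  "chirp_freq s mu = snd mu - (2 * s) *\<^sub>R fst mu"

lemma finite_chirp_freq_collisions:
  fixes mu nu :: "(real^'n) \<times> (real^'n)"
  assumes "mu \<noteq> nu"
  shows "finite {s. chirp_freq s mu = chirp_freq s nu}"
proof -
  let ?dt = "fst mu - fst nu" and ?d\<omega> = "snd mu - snd nu"
  have "{s. chirp_freq s mu = chirp_freq s nu} \<subseteq> {(?d\<omega> \<bullet> ?dt) / (2 * (?dt \<bullet> ?dt))}"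
  proof
    fix s assume "s \<in> {s. chirp_freq s mu = chirp_freq s nu}"
    then have eq: "?d\<omega> = (2 * s) *\<^sub>R ?dt"
      by (simp add: chirp_freq_def algebra_simps)
    then have "?dt \<noteq> 0"
      using assms by (auto simp: prod_eq_iff)
    moreover have "?d\<omega> \<bullet> ?dt = 2 * s * (?dt \<bullet> ?dt)"
      unfolding eq by simp
    ultimately show "s \<in> {(?d\<omega> \<bullet> ?dt) / (2 * (?dt \<bullet> ?dt))}"
      by simp
  qed
  then show ?thesis
    by (rule finite_subset) simp
qed

lemma exists_inj_on_chirp_freq:
  fixes M :: "((real^'n) \<times> (real^'n)) set"
  assumes "finite M"
  shows "\<exists>s. inj_on (chirp_freq s) M"
proof -
  have "finite (\<Union>mu\<in>M. \<Union>nu\<in>M - {mu}. {s. chirp_freq s mu = chirp_freq s nu})"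
    using assms by (intro finite_UN_I) (auto intro: finite_chirp_freq_collisions)
  then obtain s where "s \<notin> (\<Union>mu\<in>M. \<Union>nu\<in>M - {mu}. {s. chirp_freq s mu = chirp_freq s nu})"
    using ex_new_if_finite[OF infinite_UNIV_char_0] by blast
  then show ?thesis
    unfolding inj_on_def by blast
qed

definition chirp :: "real \<Rightarrow> real \<Rightarrow> real^'n \<Rightarrow> complex" where
  "chirp s L x = cis (s * (x \<bullet> x)) * of_real (indicator (cube L) x / sqrt ((2*L)^CARD('n)))"

lemma chirp_L2:
  assumes "0 < L"
  shows "chirp s L \<in> (L2 :: (real^'n \<Rightarrow> complex) set)" and "L2norm (chirp s L :: real^'n \<Rightarrow> complex) = 1"
proof -
  have sq: "(\<lambda>x::real^'n. (cmod (chirp s L x))^2) = (\<lambda>x. indicator (cube L) x / (2*L)^CARD('n))"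
    using assms by (auto simp: chirp_def norm_mult norm_divide power_divide indicator_def)
  have "chirp s L \<in> (borel_measurable lborel :: (real^'n \<Rightarrow> complex) set)"
    unfolding chirp_def by measurable
  moreover have "integrable lborel (\<lambda>x::real^'n. (cmod (chirp s L x))^2)"
    unfolding sq by (intro integrable_divide_zero integrable_indicator_cube)
  ultimately show "chirp s L \<in> (L2 :: (real^'n \<Rightarrow> complex) set)"
    unfolding L2_def by simp
  have "(LINT x|lborel. (cmod (chirp s L (x::real^'n)))^2) = measure lborel (cube L :: (real^'n) set) / (2*L)^CARD('n)"
    unfolding sq by simp
  also have "\<dots> = 1"
    using assms by (simp add: measure_cube)
  finally show "L2norm (chirp s L :: real^'n \<Rightarrow> complex) = 1"
    by (simp add: L2norm_def)
qed

definition chirp_coeff :: "real \<Rightarrow> ((real^'n) \<times> (real^'n) \<Rightarrow> complex) \<Rightarrow> (real^'n) \<times> (real^'n) \<Rightarrow> complex" where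
  "chirp_coeff s a mu = a mu * cis (s * (fst mu \<bullet> fst mu))"

lemma norm_chirp_coeff [simp]: "cmod (chirp_coeff s a mu) = cmod (a mu)"
  unfolding chirp_coeff_def by (simp add: norm_mult)

lemma tfshift_chirp:
  fixes mu :: "(real^'n) \<times> (real^'n)"
  assumes "x \<in> cube (L - R)" and "norm (fst mu) \<le> R"
  shows "tfshift mu (chirp s L) x
    = cis (s * (x \<bullet> x)) / of_real (sqrt ((2*L)^CARD('n))) * chirp_coeff s (\<lambda>_. 1) mu * cis (chirp_freq s mu \<bullet> x)"
proof -
  have "x - fst mu \<in> cube L"
    unfolding mem_cube
  proof
    fix i
    have "\<bar>x$i\<bar> \<le> L - R" "\<bar>fst mu $ i\<bar> \<le> R" "\<bar>(x - fst mu)$i\<bar> \<le> \<bar>x$i\<bar> + \<bar>fst mu $ i\<bar>"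
      using assms component_le_norm_cart[of "fst mu" i] unfolding mem_cube by auto
    then show "\<bar>(x - fst mu)$i\<bar> \<le> L"
      by linarith
  qed
  then have "tfshift mu (chirp s L) x
      = cis (snd mu \<bullet> x + s * ((x - fst mu) \<bullet> (x - fst mu))) / of_real (sqrt ((2*L)^CARD('n)))"
    by (simp add: tfshift_eq_cis chirp_def cis_mult[symmetric])
  also have "snd mu \<bullet> x + s * ((x - fst mu) \<bullet> (x - fst mu))
      = s * (x \<bullet> x) + s * (fst mu \<bullet> fst mu) + chirp_freq s mu \<bullet> x"
    by (simp add: chirp_freq_def inner_commute algebra_simps)
  finally show ?thesis
    by (simp add: chirp_coeff_def cis_mult[symmetric])
qed

lemma norm_tf_op_chirp:
  fixes M :: "((real^'n) \<times> (real^'n)) set"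
  assumes "x \<in> cube (L - R)" and "\<forall>mu\<in>M. norm (fst mu) \<le> R" and "0 < L"
  shows "cmod (tf_op M a (chirp s L) x)
    = cmod (trig_poly M (chirp_coeff s a) (chirp_freq s) x) / sqrt ((2*L)^CARD('n))"
proof -
  have "tf_op M a (chirp s L) x
      = cis (s * (x \<bullet> x)) / of_real (sqrt ((2*L)^CARD('n))) * trig_poly M (chirp_coeff s a) (chirp_freq s) x"
    unfolding tf_op_def trig_poly_def sum_distrib_left using assms
    by (intro sum.cong refl) (simp add: tfshift_chirp chirp_coeff_def ac_simps)
  then show ?thesis
    using assms by (simp add: norm_mult norm_divide)
qed

lemma integral_cube_trig_poly_le_L2norm_tf_op_chirp:
  fixes M :: "((real^'n) \<times> (real^'n)) set"
  assumes M: "finite M" and R: "\<forall>mu\<in>M. norm (fst mu) \<le> R" and L: "0 < L"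
  shows "(LINT x|lborel. indicator (cube (L - R)) x * (cmod (trig_poly M (chirp_coeff s a) (chirp_freq s) x))^2)
      / (2*L)^CARD('n) \<le> (L2norm (tf_op M a (chirp s L)))^2"
proof -
  let ?T = "\<lambda>x. (cmod (tf_op M a (chirp s L) x))^2"
  have "integrable lborel ?T"
    using tf_op_L2(1)[OF M chirp_L2(1)[OF L]] by (simp add: L2_def)
  then have "(LINT x|lborel. indicator (cube (L - R)) x
        * (cmod (trig_poly M (chirp_coeff s a) (chirp_freq s) x))^2 / (2*L)^CARD('n))
      \<le> (LINT x|lborel. ?T x)"
    by (rule integral_mono') (use norm_tf_op_chirp[OF _ R L] L in \<open>auto simp: indicator_def power_divide\<close>)
  then show ?thesis
    by (simp add: L2norm_def)
qed

lemma tendsto_shrunk_cube_mean_norm_trig_poly_sq: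
  fixes \<theta> :: "'a \<Rightarrow> real^'n"
  assumes "finite M" and "inj_on \<theta> M"
  shows "((\<lambda>L. (LINT x|lborel. indicator (cube (L - R)) x * (cmod (trig_poly M b \<theta> x))^2) / (2*L)^CARD('n))
    \<longlongrightarrow> (\<Sum>mu\<in>M. (cmod (b mu))^2)) at_top"
proof -
  let ?I = "\<lambda>r. LINT x|lborel. indicator (cube r) x * (cmod (trig_poly M b \<theta> x))^2"
  let ?d = "CARD('n)"
  have "filterlim (\<lambda>L. L - R) at_top at_top"
    using filterlim_tendsto_add_at_top[OF tendsto_const[of "- R"] filterlim_ident] by simp
  with tendsto_cube_mean_norm_trig_poly_sq[OF assms]
  have "((\<lambda>L. ?I (L - R) / (2*(L - R))^?d) \<longlongrightarrow> (\<Sum>mu\<in>M. (cmod (b mu))^2)) at_top"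
    by (rule filterlim_compose)
  then have "((\<lambda>L. (2*(L + - R))^?d / (2*L)^?d * (?I (L - R) / (2*(L - R))^?d))
      \<longlongrightarrow> 1 * (\<Sum>mu\<in>M. (cmod (b mu))^2)) at_top"
    by (rule tendsto_mult[OF tendsto_power_shift_ratio])
  moreover have "eventually (\<lambda>L. (2*(L + - R))^?d / (2*L)^?d * (?I (L - R) / (2*(L - R))^?d)
      = ?I (L - R) / (2*L)^?d) at_top"
    using eventually_gt_at_top[of "max 0 R"]
  proof eventually_elim
    case (elim L)
    then have "(2*(L + - R))^?d / (2*L)^?d * (J / (2*(L - R))^?d) = J / (2*L)^?d" for J
      by simp
    then show ?case .
  qed
  ultimately show ?thesis
    by (simp add: tendsto_cong)
qed

lemma L2norm_tf_op_chirp_le_opnorm_L2: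
  fixes M :: "((real^'n) \<times> (real^'n)) set"
  assumes "finite M" and "0 < L"
  shows "L2norm (tf_op M a (chirp s L)) \<le> opnorm_L2 (tf_op M a)"
proof (rule L2norm_tf_op_le_opnorm_L2[OF assms(1)])
  show "chirp s L \<in> L2"
    by (rule chirp_L2(1)[OF assms(2)])
  show "L2norm (chirp s L) \<le> 1"
    by (simp add: chirp_L2(2)[OF assms(2)])
qed

lemma L2_set_coeffs_le_opnorm_L2:
  fixes M :: "((real^'n) \<times> (real^'n)) set"
  assumes M: "finite M"
  shows "L2_set (\<lambda>mu. cmod (a mu)) M \<le> opnorm_L2 (tf_op M a)"
proof -
  obtain s where inj: "inj_on (chirp_freq s) M"
    using exists_inj_on_chirp_freq[OF M] by blast
  define R where "R = (\<Sum>mu\<in>M. norm (fst mu))"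
  have R: "\<forall>mu\<in>M. norm (fst mu) \<le> R"
    unfolding R_def using M by (auto intro: member_le_sum)
  let ?I = "\<lambda>L. LINT x|lborel. indicator (cube (L - R)) x * (cmod (trig_poly M (chirp_coeff s a) (chirp_freq s) x))^2"
  have "((\<lambda>L. ?I L / (2*L)^CARD('n)) \<longlongrightarrow> (\<Sum>mu\<in>M. (cmod (a mu))^2)) at_top"
    using tendsto_shrunk_cube_mean_norm_trig_poly_sq[OF M inj, of R "chirp_coeff s a"] by simp
  moreover have "eventually (\<lambda>L. ?I L / (2*L)^CARD('n) \<le> (opnorm_L2 (tf_op M a))^2) at_top"
    using eventually_gt_at_top[of 0]
  proof eventually_elim
    case (elim L)
    then have "?I L / (2*L)^CARD('n) \<le> (L2norm (tf_op M a (chirp s L)))^2"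
      by (rule integral_cube_trig_poly_le_L2norm_tf_op_chirp[OF M R])
    also have "\<dots> \<le> (opnorm_L2 (tf_op M a))^2"
      using L2norm_tf_op_chirp_le_opnorm_L2[OF M elim] by (intro power_mono) (auto simp: L2norm_nonneg)
    finally show ?case .
  qed
  ultimately have "(\<Sum>mu\<in>M. (cmod (a mu))^2) \<le> (opnorm_L2 (tf_op M a))^2"
    by (rule tendsto_upperbound) simp
  moreover have "0 \<le> opnorm_L2 (tf_op M a)"
    using L2norm_tf_op_chirp_le_opnorm_L2[OF M, of 1] by (auto intro: order_trans[OF L2norm_nonneg])
  ultimately show ?thesis
    unfolding L2_set_def by (simp add: real_le_lsqrt)
qed

section \<open>Expansions and their powers\<close>

lemma tf_op_mono_neutral:
  assumes "finite A" "B \<subseteq> A" "\<And>mu. mu \<in> A - B \<Longrightarrow> c mu = 0"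
  shows "tf_op A c g = tf_op B c g"
  unfolding tf_op_def using assms by (intro ext sum.mono_neutral_right) auto

lemma tf_expansion_unique:
  fixes S :: "(real^'n \<Rightarrow> complex) \<Rightarrow> (real^'n \<Rightarrow> complex)"
  assumes c1: "tf_expansion S c1" and c2: "tf_expansion S c2"
  shows "c1 = c2"
proof -
  define A where "A = {mu. c1 mu \<noteq> 0} \<union> {mu. c2 mu \<noteq> 0}"
  have A: "finite A"
    using c1 c2 unfolding A_def tf_expansion_def by auto
  have vanish: "tf_op A (\<lambda>mu. c1 mu - c2 mu) f = (\<lambda>x. 0)" if "f \<in> L2" for f
  proof -
    have "tf_op A c1 f = tf_op {mu. c1 mu \<noteq> 0} c1 f"
      by (rule tf_op_mono_neutral[OF A]) (auto simp: A_def)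
    moreover have "tf_op A c2 f = tf_op {mu. c2 mu \<noteq> 0} c2 f"
      by (rule tf_op_mono_neutral[OF A]) (auto simp: A_def)
    moreover have "tf_op A (\<lambda>mu. c1 mu - c2 mu) f = (\<lambda>x. tf_op A c1 f x - tf_op A c2 f x)"
      unfolding tf_op_def by (simp add: algebra_simps sum_subtractf)
    ultimately show ?thesis
      using c1 c2 that unfolding tf_expansion_def by simp
  qed
  have "L2_set (\<lambda>mu. cmod (c1 mu - c2 mu)) A \<le> opnorm_L2 (tf_op A (\<lambda>mu. c1 mu - c2 mu))"
    by (rule L2_set_coeffs_le_opnorm_L2[OF A])
  also have "\<dots> = opnorm_L2 (\<lambda>f::real^'n \<Rightarrow> complex. \<lambda>x::real^'n. 0::complex)"
    by (rule opnorm_L2_cong) (rule vanish)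
  finally have "L2_set (\<lambda>mu. cmod (c1 mu - c2 mu)) A = 0"
    unfolding opnorm_L2_zero using L2_set_nonneg by (rule order_antisym)
  then have "\<forall>mu\<in>A. c1 mu = c2 mu"
    using A by (simp add: L2_set_eq_0_iff)
  then show ?thesis
    unfolding A_def by (intro ext) (metis (mono_tags, lifting) UnI1 UnI2 mem_Collect_eq)
qed

lemma Av_norm_eq:
  assumes "tf_expansion S c"
  shows "Av_norm v S = (\<Sum>mu\<in>{mu. c mu \<noteq> 0}. v mu * cmod (c mu))"
  unfolding Av_norm_def
proof (rule the_equality)
  show "\<exists>c'. tf_expansion S c' \<and> (\<Sum>mu\<in>{mu. c mu \<noteq> 0}. v mu * cmod (c mu))
      = (\<Sum>mu\<in>{mu. c' mu \<noteq> 0}. v mu * cmod (c' mu))"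
    using assms by blast
  fix a assume "\<exists>c'. tf_expansion S c' \<and> a = (\<Sum>mu\<in>{mu. c' mu \<noteq> 0}. v mu * cmod (c' mu))"
  then obtain c' where "tf_expansion S c'" and a: "a = (\<Sum>mu\<in>{mu. c' mu \<noteq> 0}. v mu * cmod (c' mu))"
    by blast
  have "c' = c"
    using \<open>tf_expansion S c'\<close> assms by (rule tf_expansion_unique)
  then show "a = (\<Sum>mu\<in>{mu. c mu \<noteq> 0}. v mu * cmod (c mu))"
    using a by simp
qed

lemma tf_expansion_tf_op:
  assumes M: "finite M" and S: "\<And>g. S g = tf_op M a g"
  shows "tf_expansion S (\<lambda>mu. if mu \<in> M then a mu else 0)"
proof -
  let ?c = "\<lambda>mu. if mu \<in> M then a mu else 0"
  have sub: "{mu. ?c mu \<noteq> 0} \<subseteq> M"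
    by auto
  have "tf_op M a g = tf_op {mu. ?c mu \<noteq> 0} ?c g" for g
  proof -
    have "tf_op M a g = tf_op M ?c g"
      unfolding tf_op_def by (intro ext sum.cong) auto
    also have "\<dots> = tf_op {mu. ?c mu \<noteq> 0} ?c g"
      by (rule tf_op_mono_neutral[OF M sub]) auto
    finally show ?thesis .
  qed
  then show ?thesis
    unfolding tf_expansion_def using finite_subset[OF sub M] S by simp
qed

lemma tfshift_tfshift:
  "tfshift l (tfshift nu g) x = cis (- (snd nu \<bullet> fst l)) * tfshift (l + nu) g x"
proof -
  have "cis (snd l \<bullet> x) * cis (snd nu \<bullet> (x - fst l)) = cis (- (snd nu \<bullet> fst l)) * cis (snd (l + nu) \<bullet> x)"
    by (simp add: cis_mult algebra_simps)
  then show ?thesis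
    unfolding tfshift_eq_cis by (simp add: diff_diff_add mult.assoc[symmetric])
qed

lemma tf_op_tf_op:
  fixes Lam A :: "((real^'n) \<times> (real^'n)) set"
  assumes "finite Lam" and "finite A"
  shows "\<exists>b. \<forall>g. tf_op Lam c (tf_op A a g) = tf_op ((\<lambda>(l, nu). l + nu) ` (Lam \<times> A)) b g"
proof -
  define sp where "sp = (\<lambda>p::((real^'n) \<times> (real^'n)) \<times> ((real^'n) \<times> (real^'n)). fst p + snd p)"
  define coef where "coef = (\<lambda>p::((real^'n) \<times> (real^'n)) \<times> ((real^'n) \<times> (real^'n)).
    c (fst p) * a (snd p) * cis (- (snd (snd p) \<bullet> fst (fst p))))"
  define b where "b = (\<lambda>mu. \<Sum>p\<in>{p \<in> Lam \<times> A. sp p = mu}. coef p)"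
  have img: "(\<lambda>(l, nu). l + nu) ` (Lam \<times> A) = sp ` (Lam \<times> A)"
    unfolding sp_def by (auto simp: case_prod_beta)
  have "tf_op Lam c (tf_op A a g) x = tf_op (sp ` (Lam \<times> A)) b g x" for g x
  proof -
    have "tf_op Lam c (tf_op A a g) x = (\<Sum>l\<in>Lam. \<Sum>nu\<in>A. c l * (a nu * tfshift l (tfshift nu g) x))"
      unfolding tf_op_def tfshift_def by (simp add: sum_distrib_left mult.assoc mult.left_commute)
    also have "\<dots> = (\<Sum>p\<in>Lam \<times> A. coef p * tfshift (sp p) g x)"
      unfolding sum.cartesian_product tfshift_tfshift coef_def sp_def
      by (intro sum.cong refl) (auto simp: ac_simps)
    also have "\<dots> = (\<Sum>mu\<in>sp ` (Lam \<times> A). \<Sum>p\<in>{p \<in> Lam \<times> A. sp p = mu}. coef p * tfshift (sp p) g x)"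
      by (rule sum.image_gen) (use assms in simp)
    also have "\<dots> = tf_op (sp ` (Lam \<times> A)) b g x"
      unfolding tf_op_def b_def sum_distrib_right by (intro sum.cong refl) auto
    finally show ?thesis .
  qed
  then show ?thesis
    unfolding img by blast
qed

fun iter_sumset :: "'a::monoid_add set \<Rightarrow> nat \<Rightarrow> 'a set" where
  "iter_sumset A 0 = {0}"
| "iter_sumset A (Suc m) = (\<lambda>(a, b). a + b) ` (A \<times> iter_sumset A m)"

lemma finite_iter_sumset: "finite A \<Longrightarrow> finite (iter_sumset A m)"
  by (induction m) auto

lemma norm_iter_sumset_le:
  fixes A :: "'a::real_normed_vector set"
  assumes "A \<subseteq> cball 0 R" and "mu \<in> iter_sumset A m"
  shows "norm mu \<le> real m * R"
  using assms(2)
proof (induction m arbitrary: mu)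
  case (Suc m)
  then obtain l nu where "l \<in> A" "nu \<in> iter_sumset A m" "mu = l + nu"
    by auto
  then have "norm mu \<le> R + real m * R"
    using Suc.IH assms(1) by (auto intro!: order_trans[OF norm_triangle_ineq] add_mono)
  then show ?case
    by (simp add: algebra_simps)
qed simp

lemma iter_sumset_subset_image_PiE:
  fixes A :: "'a::real_vector set"
  assumes "finite A"
  shows "iter_sumset A m \<subseteq> (\<lambda>k. \<Sum>l\<in>A. real (k l) *\<^sub>R l) ` (A \<rightarrow>\<^sub>E {0..m})"
proof (induction m)
  case 0
  show ?case
    by (auto intro!: image_eqI[of _ _ "\<lambda>l\<in>A. 0"])
next
  case (Suc m)
  show ?case
  proof
    fix mu assume "mu \<in> iter_sumset A (Suc m)"
    then obtain l0 nu where l0: "l0 \<in> A" and "nu \<in> iter_sumset A m" and mu: "mu = l0 + nu"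
      by auto
    then obtain k where k: "k \<in> A \<rightarrow>\<^sub>E {0..m}" and nu: "nu = (\<Sum>l\<in>A. real (k l) *\<^sub>R l)"
      using Suc.IH by blast
    define k' where "k' = (\<lambda>l\<in>A. k l + (if l = l0 then 1 else 0))"
    have "k' \<in> A \<rightarrow>\<^sub>E {0..Suc m}"
      using k unfolding k'_def by (auto simp: PiE_iff)
    moreover have "(\<Sum>l\<in>A. real (k' l) *\<^sub>R l) = (\<Sum>l\<in>A. real (k l) *\<^sub>R l + (if l = l0 then l else 0))"
      unfolding k'_def by (intro sum.cong refl) (auto simp: algebra_simps)
    then have "(\<Sum>l\<in>A. real (k' l) *\<^sub>R l) = mu"
      unfolding sum.distrib mu nu using assms l0 by (simp add: add.commute)
    ultimately show "mu \<in> (\<lambda>k. \<Sum>l\<in>A. real (k l) *\<^sub>R l) ` (A \<rightarrow>\<^sub>E {0..Suc m})"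
      by force
  qed
qed

lemma card_iter_sumset_le:
  fixes A :: "'a::real_vector set"
  assumes "finite A"
  shows "card (iter_sumset A m) \<le> (m + 1) ^ card A"
proof -
  have "card (iter_sumset A m) \<le> card ((\<lambda>k. \<Sum>l\<in>A. real (k l) *\<^sub>R l) ` (A \<rightarrow>\<^sub>E {0..m}))"
    using assms by (intro card_mono finite_imageI finite_PiE iter_sumset_subset_image_PiE) auto
  also have "\<dots> \<le> card (A \<rightarrow>\<^sub>E {0..m})"
    using assms by (intro card_image_le finite_PiE) auto
  also have "\<dots> = (m + 1) ^ card A"
    using assms by (simp add: card_PiE)
  finally show ?thesis .
qed

lemma tf_op_funpow:
  fixes Lam :: "((real^'n) \<times> (real^'n)) set"
  assumes "finite Lam"
  shows "\<exists>b. \<forall>g. (tf_op Lam c ^^ m) g = tf_op (iter_sumset Lam m) b g"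
proof (induction m)
  case 0
  have "tf_op {0} (\<lambda>_. 1) g = g" for g :: "real^'n \<Rightarrow> complex"
    unfolding tf_op_def tfshift_def by (simp add: zero_prod_def)
  then show ?case
    by (intro exI[of _ "\<lambda>_. 1"]) simp
next
  case (Suc m)
  then obtain b where "\<forall>g. (tf_op Lam c ^^ m) g = tf_op (iter_sumset Lam m) b g"
    by blast
  moreover obtain b' where "\<forall>g. tf_op Lam c (tf_op (iter_sumset Lam m) b g) = tf_op (iter_sumset Lam (Suc m)) b' g"
    using tf_op_tf_op[OF assms finite_iter_sumset[OF assms], where c = c and a = b] by auto
  ultimately show ?case
    by auto
qed

lemma submultiplicative_sum_le:
  fixes v :: "'a::real_normed_vector \<Rightarrow> real"
  assumes "weight v" and "submultiplicative v" and "finite B"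
  shows "v (\<Sum>b\<in>B. f b) \<le> (\<Prod>b\<in>B. v (f b))"
  using assms(3)
proof (induction B rule: finite_induct)
  case empty
  then show ?case
    using assms(1) by (simp add: weight_def)
next
  case (insert x F)
  have "v (\<Sum>b\<in>insert x F. f b) \<le> v (f x) * v (\<Sum>b\<in>F. f b)"
    using insert assms(2) by (simp add: submultiplicative_def)
  also have "\<dots> \<le> v (f x) * (\<Prod>b\<in>F. v (f b))"
    using insert assms(1) by (intro mult_left_mono) (auto simp: weight_def)
  finally show ?case
    using insert by simp
qed

lemma weight_scaleR_mono:
  assumes "weight v" and "\<bar>s\<bar> \<le> t"
  shows "v (s *\<^sub>R x) \<le> v (t *\<^sub>R x)"
proof (cases "0 \<le> s")
  case True
  then show ?thesis
    using assms by (auto simp: weight_def)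
next
  case False
  then have "v (s *\<^sub>R x) = v ((- s) *\<^sub>R x)"
    using assms(1) unfolding weight_def by (metis scaleR_minus_left)
  also have "\<dots> \<le> v (t *\<^sub>R x)"
  proof -
    have "0 \<le> - s" "- s \<le> t"
      using assms(2) False by auto
    then show ?thesis
      using assms(1) unfolding weight_def by blast
  qed
  finally show ?thesis .
qed

lemma weight_le_prod_Basis:
  fixes v :: "'a::euclidean_space \<Rightarrow> real"
  assumes "weight v" and "submultiplicative v" and "norm x = a"
  shows "v x \<le> (\<Prod>b\<in>Basis. v (a *\<^sub>R b))"
proof -
  have "v x = v (\<Sum>b\<in>Basis. (x \<bullet> b) *\<^sub>R b)"
    by (simp add: euclidean_representation)
  also have "\<dots> \<le> (\<Prod>b\<in>Basis. v ((x \<bullet> b) *\<^sub>R b))"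
    by (rule submultiplicative_sum_le[OF assms(1,2) finite_Basis])
  also have "\<dots> \<le> (\<Prod>b\<in>Basis. v (a *\<^sub>R b))"
  proof (rule prod_mono)
    fix b :: 'a assume "b \<in> Basis"
    then have "\<bar>x \<bullet> b\<bar> \<le> a"
      using Basis_le_norm assms(3) by blast
    then show "0 \<le> v ((x \<bullet> b) *\<^sub>R b) \<and> v ((x \<bullet> b) *\<^sub>R b) \<le> v (a *\<^sub>R b)"
      using assms(1) weight_scaleR_mono by (auto simp: weight_def)
  qed
  finally show ?thesis .
qed

text \<open>Submultiplicativity bounds \<open>v\<close> on the sphere by its values at the scaled basis vectors;
  without such a bound \<open>sphere_sup v a\<close> would be the junk value of \<open>Sup\<close> on an unbounded set.\<close>

lemma weight_le_sphere_sup: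
  fixes v :: "'a::euclidean_space \<Rightarrow> real"
  assumes w: "weight v" and "submultiplicative v" and "0 < a" and "norm mu \<le> a"
  shows "v mu \<le> sphere_sup v a"
proof -
  have bdd: "bdd_above (v ` {x. norm x = a})"
    using weight_le_prod_Basis[OF assms(1,2)] by (intro bdd_aboveI[of _ "\<Prod>b\<in>Basis. v (a *\<^sub>R b)"]) auto
  obtain y where y: "norm y = a" and "v mu \<le> v y"
  proof (cases "mu = 0")
    case True
    obtain b :: 'a where "b \<in> Basis"
      using nonempty_Basis by blast
    then have "norm (a *\<^sub>R b) = a"
      using assms(3) by simp
    moreover have "v mu \<le> v (a *\<^sub>R b)"
      using w weight_scaleR_mono[OF w, of 0 a b] True assms(3) by simp
    ultimately show ?thesis
      using that by blast
  next
    case False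
    have "v mu = v ((norm mu / a) *\<^sub>R ((a / norm mu) *\<^sub>R mu))"
      using False assms(3) by simp
    also have "\<dots> \<le> v (1 *\<^sub>R ((a / norm mu) *\<^sub>R mu))"
      using assms(3,4) by (intro weight_scaleR_mono[OF w]) auto
    finally have "v mu \<le> v ((a / norm mu) *\<^sub>R mu)"
      by simp
    moreover have "norm ((a / norm mu) *\<^sub>R mu) = a"
      using False assms(3) by simp
    ultimately show ?thesis
      using that by blast
  qed
  moreover have "v y \<le> sphere_sup v a"
    unfolding sphere_sup_def using y by (intro cSup_upper[OF _ bdd]) simp
  ultimately show ?thesis
    by linarith
qed

lemma Av_norm_le_sphere_sup_opnorm_L2:
  assumes S: "tf_expansion S b" and supp: "{mu. b mu \<noteq> 0} \<subseteq> cball 0 \<rho>" and "0 < \<rho>"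
    and card: "real (card {mu. b mu \<noteq> 0}) \<le> N"
    and w: "weight v" and sm: "submultiplicative v"
  shows "Av_norm v S \<le> sqrt N * sphere_sup v \<rho> * opnorm_L2 S"
proof -
  define A where "A = {mu. b mu \<noteq> 0}"
  define W where "W = sphere_sup v \<rho>"
  have A: "finite A"
    using S unfolding A_def tf_expansion_def by blast
  have vW: "v mu \<le> W" if "mu \<in> A" for mu
    unfolding W_def using supp that \<open>0 < \<rho>\<close> by (intro weight_le_sphere_sup[OF w sm]) (auto simp: A_def)
  have "0 \<le> W"
    using weight_le_sphere_sup[OF w sm \<open>0 < \<rho>\<close>, of 0] w \<open>0 < \<rho>\<close> unfolding W_def weight_def by force
  have "Av_norm v S = (\<Sum>mu\<in>A. v mu * cmod (b mu))"
    unfolding A_def by (rule Av_norm_eq[OF S])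
  also have "\<dots> \<le> (\<Sum>mu\<in>A. W * cmod (b mu))"
    by (intro sum_mono mult_right_mono) (simp_all add: vW)
  also have "\<dots> = W * (\<Sum>mu\<in>A. \<bar>1\<bar> * \<bar>cmod (b mu)\<bar>)"
    by (simp add: sum_distrib_left)
  also have "\<dots> \<le> W * (L2_set (\<lambda>_. 1) A * L2_set (\<lambda>mu. cmod (b mu)) A)"
    using \<open>0 \<le> W\<close> by (intro mult_left_mono L2_set_mult_ineq)
  also have "\<dots> \<le> W * (sqrt N * opnorm_L2 (tf_op A b))"
    using \<open>0 \<le> W\<close> card L2_set_coeffs_le_opnorm_L2[OF A, of b]
    by (intro mult_left_mono mult_mono) (auto simp: L2_set_constant A_def)
  also have "opnorm_L2 (tf_op A b) = opnorm_L2 S"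
    using S unfolding A_def tf_expansion_def by (intro opnorm_L2_cong) simp
  finally show ?thesis
    unfolding W_def by (simp add: ac_simps)
qed

theorem lemma1:
  fixes Lam :: "((real^'n) \<times> (real^'n)) set"
    and c :: "(real^'n) \<times> (real^'n) \<Rightarrow> complex"
    and R0 :: real
    and v :: "(real^'n) \<times> (real^'n) \<Rightarrow> real"
    and n :: nat
  assumes "finite Lam"
    and "R0 > 0"
    and "Lam \<subseteq> cball 0 R0"
    and "weight v" and "submultiplicative v"
    and "n \<ge> 1"
  shows "Av_norm v (tf_op Lam c ^^ n)
     \<le> (real n + 1) powr (real (card Lam) / 2) * sphere_sup v (real n * R0)
        * opnorm_L2 (tf_op Lam c ^^ n)"
proof -
  obtain a where a: "\<And>g. (tf_op Lam c ^^ n) g = tf_op (iter_sumset Lam n) a g"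
    using tf_op_funpow[OF assms(1)] by blast
  define b where "b = (\<lambda>mu. if mu \<in> iter_sumset Lam n then a mu else 0)"
  have exp: "tf_expansion (tf_op Lam c ^^ n) b"
    unfolding b_def by (rule tf_expansion_tf_op[OF finite_iter_sumset[OF assms(1)] a])
  have supp: "{mu. b mu \<noteq> 0} \<subseteq> iter_sumset Lam n"
    unfolding b_def by auto
  have ball: "{mu. b mu \<noteq> 0} \<subseteq> cball 0 (real n * R0)"
    using supp norm_iter_sumset_le[OF assms(3)] by auto
  have card: "real (card {mu. b mu \<noteq> 0}) \<le> (real n + 1) ^ card Lam"
    using card_mono[OF finite_iter_sumset[OF assms(1)] supp] card_iter_sumset_le[OF assms(1), of n]
    by (metis (mono_tags) add.commute of_nat_Suc of_nat_le_iff of_nat_power order_trans plus_1_eq_Suc)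
  have "Av_norm v (tf_op Lam c ^^ n)
      \<le> sqrt ((real n + 1) ^ card Lam) * sphere_sup v (real n * R0) * opnorm_L2 (tf_op Lam c ^^ n)"
    using assms(2,6) by (intro Av_norm_le_sphere_sup_opnorm_L2[OF exp ball _ card assms(4,5)]) simp
  also have "sqrt ((real n + 1) ^ card Lam) = (real n + 1) powr (real (card Lam) / 2)"
    by (simp add: powr_half_sqrt[symmetric] powr_realpow[symmetric] powr_powr)
  finally show ?thesis .
qed

end
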